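(* Let $A \ge B \ge C \ge 1$ be integers, $e=A+B+C-3$, $m=\lfloor\frac{e-1}{2}\rfloor$, and let $\Bbbk$ be a field. For $0\le r\le e$ let $U_r : R_r \to R_{r+1}$ be multiplication by $x+y+z$ on the degree-$r$ component of $R=\Bbbk[x,y,z]/(x^A,y^B,z^C)$. Then the maps $U_r$ for all $0\le r \le m$ are injective if and only if $U_m$ is injective.
   Context: $R$ is graded by total degree, $R_r$ denotes its degree-$r$ homogeneous component (spanned by the monomials $x^iy^jz^k$ with $i<A$, $j<B$, $k<C$, $i+j+k=r$). *)

theory Defs
  imports Main
begin

(* The degree-r component R_r of R = k[x,y,z]/(x^A,y^B,z^C) has as basis the
monomials x^i y^j z^k with i<A, j<B, k<C, i+j+k=r. An element of R_r is represented
by its coefficient function on exponent triples, vanishing off that set.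
Degrees are integers so that a negative degree gives the zero space. *)

definition box_monos :: "nat \<Rightarrow> nat \<Rightarrow> nat \<Rightarrow> int \<Rightarrow> (nat \<times> nat \<times> nat) set" where
  "box_monos A B C r = {(i,j,k). i < A \<and> j < B \<and> k < C \<and> int (i+j+k) = r}"

definition comp_space :: "nat \<Rightarrow> nat \<Rightarrow> nat \<Rightarrow> int \<Rightarrow> (nat \<times> nat \<times> nat \<Rightarrow> 'a::zero) set" where
  "comp_space A B C r = {f. \<forall>p. p \<notin> box_monos A B C r \<longrightarrow> f p = 0}"

(* U_r: multiplication by x+y+z, from R_r to R_{r+1} (terms leaving the box vanish). *)
definition mult_xyz :: "nat \<Rightarrow> nat \<Rightarrow> nat \<Rightarrow> int \<Rightarrow> (nat \<times> nat \<times> nat \<Rightarrow> 'a::field)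
    \<Rightarrow> (nat \<times> nat \<times> nat \<Rightarrow> 'a)" where
  "mult_xyz A B C r f = (\<lambda>(i,j,k).
     if (i,j,k) \<in> box_monos A B C (r+1) then
       (if 0 < i then f (i-1,j,k) else 0) + (if 0 < j then f (i,j-1,k) else 0)
       + (if 0 < k then f (i,j,k-1) else 0)
     else 0)"

end

theory Submission
  imports Defs "HOL-Library.Function_Algebras"
begin

(* Multiplication by the monomial x^a y^b z^c commutes with multiplication by x+y+z.
   Below the top degree e every monomial of the box can still be multiplied by some
   variable without leaving the box, so multiplying a nonzero kernel element of U_r by
   that variable yields a nonzero kernel element of U_(r+1). Hence injectivity of U_s
   propagates to all U_r with r <= s <= e, in particular from s = m. *)

definition mult_monomial :: "nat \<Rightarrow> nat \<Rightarrow> nat \<Rightarrow> int \<Rightarrow> nat \<times> nat \<times> nat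
    \<Rightarrow> (nat \<times> nat \<times> nat \<Rightarrow> 'a::zero) \<Rightarrow> (nat \<times> nat \<times> nat \<Rightarrow> 'a)" where
  "mult_monomial A B C r q f = (\<lambda>(i,j,k). case q of (a,b,c) \<Rightarrow>
     if (i,j,k) \<in> box_monos A B C (r + int (a+b+c)) \<and> a \<le> i \<and> b \<le> j \<and> c \<le> k
     then f (i-a, j-b, k-c) else 0)"

lemma mult_monomial_apply:
  "mult_monomial A B C r (a,b,c) f (i,j,k) =
     (if (i,j,k) \<in> box_monos A B C (r + int (a+b+c)) \<and> a \<le> i \<and> b \<le> j \<and> c \<le> k
      then f (i-a, j-b, k-c) else 0)"
  by (simp add: mult_monomial_def)

lemma mult_monomial_in_comp_space:
  "mult_monomial A B C r (a,b,c) f \<in> comp_space A B C (r + int (a+b+c))"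
  by (auto simp: comp_space_def mult_monomial_def)

lemma mult_monomial_zero [simp]: "mult_monomial A B C r q 0 = 0"
  by (auto simp: mult_monomial_def split: prod.split)

lemma mult_xyz_mult_monomial:
  "mult_xyz A B C (r + int (a+b+c)) (mult_monomial A B C r (a,b,c) f)
     = mult_monomial A B C (r+1) (a,b,c) (mult_xyz A B C r f)"
proof (rule ext, clarify)
  fix i j k
  let ?g = "mult_monomial A B C r (a,b,c) f"
  show "mult_xyz A B C (r + int (a+b+c)) ?g (i,j,k)
     = mult_monomial A B C (r+1) (a,b,c) (mult_xyz A B C r f) (i,j,k)"
  proof (cases "(i,j,k) \<in> box_monos A B C (r + int (a+b+c) + 1)")
    case inbox: True
    have x_term: "(if 0 < i then ?g (i-1,j,k) else 0)
        = (if a \<le> i \<and> b \<le> j \<and> c \<le> k \<and> 0 < i - a then f (i-a-1, j-b, k-c) else 0)"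
      using inbox by (auto simp: mult_monomial_apply box_monos_def)
    have y_term: "(if 0 < j then ?g (i,j-1,k) else 0)
        = (if a \<le> i \<and> b \<le> j \<and> c \<le> k \<and> 0 < j - b then f (i-a, j-b-1, k-c) else 0)"
      using inbox by (auto simp: mult_monomial_apply box_monos_def)
    have z_term: "(if 0 < k then ?g (i,j,k-1) else 0)
        = (if a \<le> i \<and> b \<le> j \<and> c \<le> k \<and> 0 < k - c then f (i-a, j-b, k-c-1) else 0)"
      using inbox by (auto simp: mult_monomial_apply box_monos_def)
    show ?thesis
      using inbox by (auto simp: mult_xyz_def mult_monomial_apply x_term y_term z_term box_monos_def algebra_simps)
  next
    case False
    then show ?thesis by (simp add: mult_xyz_def mult_monomial_apply algebra_simps)
  qed
qed

lemma mult_xyz_zero [simp]: "mult_xyz A B C r 0 = 0"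
  by (auto simp: mult_xyz_def)

lemma mult_xyz_diff:
  "mult_xyz A B C r (f - g) = mult_xyz A B C r f - mult_xyz A B C r g"
  by (auto simp: mult_xyz_def algebra_simps)

lemma inj_on_mult_xyz_iff:
  "inj_on (mult_xyz A B C r :: (nat \<times> nat \<times> nat \<Rightarrow> 'a::field) \<Rightarrow> _) (comp_space A B C r)
     \<longleftrightarrow> (\<forall>f \<in> comp_space A B C r. mult_xyz A B C r f = (0 :: _ \<Rightarrow> 'a) \<longrightarrow> f = 0)"
proof
  assume "inj_on (mult_xyz A B C r :: _ \<Rightarrow> _ \<Rightarrow> 'a) (comp_space A B C r)"
  moreover have "0 \<in> comp_space A B C r" by (simp add: comp_space_def)
  ultimately show "\<forall>f \<in> comp_space A B C r. mult_xyz A B C r f = (0 :: _ \<Rightarrow> 'a) \<longrightarrow> f = 0"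
    by (metis inj_onD mult_xyz_zero)
next
  assume kernel: "\<forall>f \<in> comp_space A B C r. mult_xyz A B C r f = (0 :: _ \<Rightarrow> 'a) \<longrightarrow> f = 0"
  show "inj_on (mult_xyz A B C r :: _ \<Rightarrow> _ \<Rightarrow> 'a) (comp_space A B C r)"
  proof (rule inj_onI)
    fix f g :: "nat \<times> nat \<times> nat \<Rightarrow> 'a"
    assume "f \<in> comp_space A B C r" "g \<in> comp_space A B C r"
      and "mult_xyz A B C r f = mult_xyz A B C r g"
    then have "f - g \<in> comp_space A B C r" and "mult_xyz A B C r (f - g) = 0"
      by (auto simp: comp_space_def mult_xyz_diff)
    with kernel show "f = g" by auto
  qed
qed

lemma comp_space_negative_degree:
  assumes "r < 0"
  shows "comp_space A B C r = {0}"
  using assms by (auto simp: comp_space_def box_monos_def)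

lemma mult_xyz_kernel_Suc:
  fixes f :: "nat \<times> nat \<times> nat \<Rightarrow> 'a::field"
  assumes f: "f \<in> comp_space A B C r" "f \<noteq> 0" "mult_xyz A B C r f = 0"
    and below_top: "r + 1 \<le> int A + int B + int C - 3"
  shows "\<exists>g \<in> comp_space A B C (r+1). g \<noteq> (0 :: _ \<Rightarrow> 'a) \<and> mult_xyz A B C (r+1) g = 0"
proof -
  obtain i j k where fijk: "f (i,j,k) \<noteq> 0"
    using f(2) by (metis ext prod_cases3 zero_fun_def)
  then have ijk: "(i,j,k) \<in> box_monos A B C r"
    using f(1) by (auto simp: comp_space_def)
  obtain a b c where abc: "a + b + c = 1" "(i+a, j+b, k+c) \<in> box_monos A B C (r+1)"
  proof -
    have "i + 1 < A \<or> j + 1 < B \<or> k + 1 < C"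
      using ijk below_top by (auto simp: box_monos_def)
    then show ?thesis
      using ijk that[of 1 0 0] that[of 0 1 0] that[of 0 0 1] by (auto simp: box_monos_def)
  qed
  define g where "g = mult_monomial A B C r (a,b,c) f"
  have "g \<in> comp_space A B C (r+1)"
    using mult_monomial_in_comp_space[of A B C r a b c f] abc(1) by (simp add: g_def)
  moreover have "g \<noteq> 0"
  proof
    assume "g = 0"
    moreover have "g (i+a, j+b, k+c) = f (i,j,k)"
      using abc by (simp add: g_def mult_monomial_apply)
    ultimately show False
      using fijk by simp
  qed
  moreover have "mult_xyz A B C (r+1) g = 0"
    using mult_xyz_mult_monomial[of A B C r a b c f] abc(1) f(3) by (simp add: g_def)
  ultimately show ?thesis
    by blast
qed

lemma inj_on_mult_xyz_lower:
  assumes inj: "inj_on (mult_xyz A B C s :: (nat \<times> nat \<times> nat \<Rightarrow> 'a::field) \<Rightarrow> _) (comp_space A B C s)"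
    and "r \<le> s" and s_le: "s \<le> int A + int B + int C - 3"
  shows "inj_on (mult_xyz A B C r :: (nat \<times> nat \<times> nat \<Rightarrow> 'a) \<Rightarrow> _) (comp_space A B C r)"
  using \<open>r \<le> s\<close>
proof (induction r rule: int_le_induct)
  case base
  show ?case by (fact inj)
next
  case (step r)
  show ?case
    unfolding inj_on_mult_xyz_iff
  proof (intro ballI impI, rule ccontr)
    fix f :: "nat \<times> nat \<times> nat \<Rightarrow> 'a"
    assume "f \<in> comp_space A B C (r - 1)" "mult_xyz A B C (r - 1) f = 0" "f \<noteq> 0"
    then obtain g :: "nat \<times> nat \<times> nat \<Rightarrow> 'a"
      where "g \<in> comp_space A B C r" "g \<noteq> 0" "mult_xyz A B C r g = 0"
      using mult_xyz_kernel_Suc[of f A B C "r - 1"] step.hyps s_le by auto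
    with step.IH show False
      unfolding inj_on_mult_xyz_iff by blast
  qed
qed

theorem corollary1:
  fixes A B C :: nat and e m :: int
  assumes "A \<ge> B" and "B \<ge> C" and "C \<ge> 1"
  defines "e \<equiv> int A + int B + int C - 3"
  defines "m \<equiv> (e - 1) div 2"
  shows "(\<forall>r. 0 \<le> r \<and> r \<le> m \<longrightarrow>
            inj_on (mult_xyz A B C r :: (nat \<times> nat \<times> nat \<Rightarrow> 'a::field) \<Rightarrow> _) (comp_space A B C r))
         \<longleftrightarrow> inj_on (mult_xyz A B C m :: (nat \<times> nat \<times> nat \<Rightarrow> 'a::field) \<Rightarrow> _) (comp_space A B C m)"
proof
  assume "\<forall>r. 0 \<le> r \<and> r \<le> m \<longrightarrow>
            inj_on (mult_xyz A B C r :: (nat \<times> nat \<times> nat \<Rightarrow> 'a) \<Rightarrow> _) (comp_space A B C r)"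
  then show "inj_on (mult_xyz A B C m :: (nat \<times> nat \<times> nat \<Rightarrow> 'a) \<Rightarrow> _) (comp_space A B C m)"
    by (cases "0 \<le> m") (auto simp: comp_space_negative_degree)
next
  assume "inj_on (mult_xyz A B C m :: (nat \<times> nat \<times> nat \<Rightarrow> 'a) \<Rightarrow> _) (comp_space A B C m)"
  moreover have "m \<le> int A + int B + int C - 3"
    using assms(1-3) unfolding m_def e_def by linarith
  ultimately show "\<forall>r. 0 \<le> r \<and> r \<le> m \<longrightarrow>
            inj_on (mult_xyz A B C r :: (nat \<times> nat \<times> nat \<Rightarrow> 'a) \<Rightarrow> _) (comp_space A B C r)"
    using inj_on_mult_xyz_lower by blast
qed

end
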